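(* Let $\Sigma$ be an alphabet and $L\ge n\ge 1$. Let $h_1:\Sigma\to\mathrm{GF}(2)[x]/(x^L+1)$ be a random function whose values $h_1(c)$, $c\in\Sigma$, are mutually independent and uniformly distributed, and let $h(a_1,\dots,a_n)=\sum_{i=1}^n h_1(a_i)x^{n-i}$ computed in $\mathrm{GF}(2)[x]/(x^L+1)$. Fix a set $S$ of $n-1$ bit positions consecutive modulo $L$, and let $\tilde h(a)$ denote the $(L-n+1)$-bit value obtained from $h(a)$ by deleting the bits at positions in $S$. Then $\tilde h$ is pairwise independent: for all distinct $a,a'\in\Sigma^n$ and all $(L-n+1)$-bit values $y,y'$, $P(\tilde h(a)=y\wedge\tilde h(a')=y')=2^{-2(L-n+1)}$.
   Context: This is the Cyclic hash family. Elements of $\mathrm{GF}(2)[x]/(x^L+1)$ are identified with polynomials $\sum_{i=0}^{L-1}c_ix^i$ over $\mathrm{GF}(2)$ (equivalently $L$-bit integers with bit $i$ equal to $c_i$). A set of $m$ positions is consecutive modulo $L$ if it equals $\{k\bmod L,\dots,(k+m-1)\bmod L\}$ for some integer $k$. *)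

theory Defs
  imports Main "HOL-Library.Z2" "HOL-Computational_Algebra.Polynomial"
    "HOL-Computational_Algebra.Polynomial_Factorial"
begin

text \<open>Elements of GF(2)[x]/(x^L+1) are represented by their canonical representatives:
  polynomials over GF(2) (the type bit of HOL-Library.Z2) of degree less than L.
  Bit i of an element p is coeff p i.\<close>

definition cyc_ring :: "nat \<Rightarrow> bit poly set" where
  "cyc_ring L = {p. degree p < L}"

definition cyc_red :: "nat \<Rightarrow> bit poly \<Rightarrow> bit poly" where
  "cyc_red L p = p mod (monom 1 L + 1)"

text \<open>The Cyclic hash: h(a_1..a_n) = sum_{i=1}^n h1(a_i) x^(n-i) in GF(2)[x]/(x^L+1).
  The string a is a list of length n, a!(i-1) = a_i.\<close>
definition cyclic_hash :: "nat \<Rightarrow> ('a \<Rightarrow> bit poly) \<Rightarrow> 'a list \<Rightarrow> bit poly" where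
  "cyclic_hash L h1 a =
     cyc_red L (\<Sum>i<length a. h1 (a ! i) * monom 1 (length a - 1 - i))"

definition cons_positions :: "nat \<Rightarrow> int \<Rightarrow> nat \<Rightarrow> nat set" where
  "cons_positions L k m = (\<lambda>j. nat ((k + int j) mod int L)) ` {0..<m}"

definition delete_bits :: "nat \<Rightarrow> nat set \<Rightarrow> bit poly \<Rightarrow> bit list" where
  "delete_bits L S p = map (coeff p) (sorted_list_of_set ({0..<L} - S))"

text \<open>Uniform probability over all functions h1 : Sigma \<Rightarrow> GF(2)[x]/(x^L+1)
  (Sigma a finite type), i.e. mutually independent uniform values.\<close>
definition prob_h1 :: "nat \<Rightarrow> (('a::finite \<Rightarrow> bit poly) \<Rightarrow> bool) \<Rightarrow> real" where
  "prob_h1 L E =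
     real (card {h1. (\<forall>c. h1 c \<in> cyc_ring L) \<and> E h1})
     / real (card {h1 :: 'a \<Rightarrow> bit poly. \<forall>c. h1 c \<in> cyc_ring L})"

end

theory Submission
  imports Defs "HOL-Library.FuncSet" "HOL-Library.Function_Algebras"
begin

(*
  Everything is linear over GF(2).  The random functions h1 form a finite group X under
  pointwise addition, and each of the 2m observed bits (m = L - n + 1 kept bits of h(a) and
  of h(a')) is an additive function of h1.  By a character-sum argument (uniform_fibres), such a
  linear map hits every target with exactly |X| / 2^(2m) preimages, provided no nonzero linear
  combination of the observed bits vanishes identically on X.

  To establish this nondegeneracy, a combination is evaluated on the elementary functions
  h1 = unit_fn c p (the letter c goes to x^p, every other letter to 0).  Measuring each kept
  position by its cyclic distance behind the deleted window turns the value into a coefficient,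
  at some exponent E < L, of F * [a = c] + G * [a' = c]: here F, G have degree < m and are built
  from the combination, and [s = c] is the occurrence polynomial of c in s, of degree < n.
  Because deg < m + n - 1 = L no wrap-around occurs, and nondegenerate_pair shows that some such
  coefficient is 1 whenever a \<noteq> a' and the combination is nonzero.
*)

subsection \<open>Characters of GF(2) and uniform fibres of linear maps\<close>

lemma bit_add_self [simp]: "(b::bit) + b = 0"
  by simp

lemma bit_add_eq_0_iff: "(x::bit) + y = 0 \<longleftrightarrow> x = y"
  by (cases x; cases y) simp_all

lemma bitpoly_add_self [simp]: "(p::bit poly) + p = 0"
  by (rule poly_eqI) (simp only: coeff_add bit_add_self coeff_0)

lemma bitpoly_uminus [simp]: "- (p::bit poly) = p"
  by (rule poly_eqI) simp

lemma UNIV_bit: "(UNIV::bit set) = {0, 1}"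
  using bit.exhaust by auto

lemma finite_UNIV_bit [simp]: "finite (UNIV::bit set)"
  by (simp add: UNIV_bit)

lemma sum_UNIV_bool: "(\<Sum>b\<in>UNIV. F b) = F True + (F False :: 'b::comm_monoid_add)"
  by (simp add: UNIV_bool add.commute)

definition chi :: "bit \<Rightarrow> real" where
  "chi b = (if b = 0 then 1 else -1)"

lemma chi_add: "chi (x + y) = chi x * chi y"
  by (cases x; cases y) (simp_all add: chi_def)

lemma chi_sum: "chi (\<Sum>d\<in>D. f d) = (\<Prod>d\<in>D. chi (f d))"
proof (induction D rule: infinite_finite_induct)
  case (insert x F)
  then show ?case by (simp only: sum.insert[OF insert(1,2)] prod.insert[OF insert(1,2)] chi_add)
qed (simp_all add: chi_def)

lemma chi_flip: "chi (x + 1 + c) = - chi (x + c)"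
  by (cases x; cases c) (simp_all add: chi_def)

lemma character_orthogonality:
  assumes "finite D"
  shows "(\<Sum>\<sigma>\<in>PiE D (\<lambda>_. UNIV). chi (\<Sum>d\<in>D. \<sigma> d * w d))
         = (if \<forall>d\<in>D. w d = 0 then 2 ^ card D else 0)"
proof -
  have "(\<Sum>\<sigma>\<in>PiE D (\<lambda>_. UNIV). chi (\<Sum>d\<in>D. \<sigma> d * w d))
        = (\<Prod>d\<in>D. \<Sum>b\<in>UNIV. chi (b * w d))"
    unfolding chi_sum by (rule prod_sum_PiE[symmetric]) (simp_all add: assms)
  also have "\<dots> = (\<Prod>d\<in>D. if w d = 0 then 2 else 0)"
    by (intro prod.cong refl) (simp add: UNIV_bit chi_def)
  finally show ?thesis
    using assms by (simp add: prod.neutral_const[symmetric] prod_zero cong: prod.cong)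
qed

(* If an additive function \<phi> takes the value 1 at some e of a finite group X, then
   translation by e pairs up the terms, so the character sum of \<phi> (plus a constant) vanishes. *)
lemma shifted_character_sum:
  fixes X :: "'h::ab_group_add set" and \<phi> :: "'h \<Rightarrow> bit"
  assumes "finite X" and e: "e \<in> X"
    and add_closed: "\<And>h e. h \<in> X \<Longrightarrow> e \<in> X \<Longrightarrow> h + e \<in> X"
    and neg_closed: "\<And>e. e \<in> X \<Longrightarrow> - e \<in> X"
    and shift: "\<And>h. h \<in> X \<Longrightarrow> \<phi> (h + e) = \<phi> h + 1"
  shows "(\<Sum>h\<in>X. chi (\<phi> h + c)) = 0"
proof -
  have bij: "bij_betw (\<lambda>h. h + e) X X"
    using add_closed[OF _ neg_closed[OF e]]
    by (intro bij_betwI[where g = "\<lambda>h. h - e"]) (auto simp: add_closed e)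
  have "(\<Sum>h\<in>X. chi (\<phi> h + c)) = (\<Sum>h\<in>X. chi (\<phi> (h + e) + c))"
    using sum.reindex_bij_betw[OF bij, of "\<lambda>h. chi (\<phi> h + c)"] by simp
  also have "\<dots> = (\<Sum>h\<in>X. - chi (\<phi> h + c))"
    by (intro sum.cong refl) (simp only: shift chi_flip)
  finally show ?thesis
    by (simp add: sum_negf)
qed

(* Proof by expanding the fibre indicator into
   characters; only the trivial character survives. *)
lemma uniform_fibres:
  fixes X :: "'h::ab_group_add set" and G :: "'h \<Rightarrow> 'd \<Rightarrow> bit"
  assumes "finite X" and "finite D"
    and add_closed: "\<And>h e. h \<in> X \<Longrightarrow> e \<in> X \<Longrightarrow> h + e \<in> X"
    and neg_closed: "\<And>e. e \<in> X \<Longrightarrow> - e \<in> X"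
    and additive: "\<And>h e d. h \<in> X \<Longrightarrow> e \<in> X \<Longrightarrow> d \<in> D \<Longrightarrow> G (h + e) d = G h d + G e d"
    and nondegenerate: "\<And>\<sigma>. \<sigma> \<in> PiE D (\<lambda>_. UNIV) \<Longrightarrow> (\<exists>d\<in>D. \<sigma> d \<noteq> 0) \<Longrightarrow>
                          \<exists>e\<in>X. (\<Sum>d\<in>D. \<sigma> d * G e d) = 1"
  shows "real (card {h\<in>X. \<forall>d\<in>D. G h d = t d}) * 2 ^ card D = real (card X)"
proof -
  define P where "P = PiE D (\<lambda>_. UNIV :: bit set)"
  define zero where "zero = (\<lambda>d. if d \<in> D then (0::bit) else undefined)"
  define \<chi> where "\<chi> \<sigma> h = chi (\<Sum>d\<in>D. \<sigma> d * (G h d + t d))" for \<sigma> h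
  have zero: "zero \<in> P"
    by (auto simp: P_def zero_def)
  have "real (card {h\<in>X. \<forall>d\<in>D. G h d = t d}) * 2 ^ card D
        = (\<Sum>h\<in>X. if \<forall>d\<in>D. G h d + t d = 0 then 2 ^ card D else 0)"
    by (simp only: bit_add_eq_0_iff sum.If_cases[OF \<open>finite X\<close>] sum_constant
        sum.neutral_const add_0_right Int_def mem_Collect_eq)
  also have "\<dots> = (\<Sum>h\<in>X. \<Sum>\<sigma>\<in>P. \<chi> \<sigma> h)"
    by (simp only: P_def \<chi>_def character_orthogonality[OF \<open>finite D\<close>])
  also have "\<dots> = (\<Sum>\<sigma>\<in>P. \<Sum>h\<in>X. \<chi> \<sigma> h)"
    by (rule sum.swap)
  also have "\<dots> = (\<Sum>h\<in>X. \<chi> zero h) + (\<Sum>\<sigma>\<in>P - {zero}. \<Sum>h\<in>X. \<chi> \<sigma> h)"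
    using zero \<open>finite D\<close> by (simp add: P_def sum.remove finite_PiE)
  also have "(\<Sum>h\<in>X. \<chi> zero h) = real (card X)"
    by (simp add: \<chi>_def zero_def chi_def)
  also have "(\<Sum>\<sigma>\<in>P - {zero}. \<Sum>h\<in>X. \<chi> \<sigma> h) = 0"
  proof (rule sum.neutral, rule ballI)
    fix \<sigma> assume \<sigma>: "\<sigma> \<in> P - {zero}"
    then have "\<exists>d\<in>D. \<sigma> d \<noteq> 0"
      by (auto simp: P_def zero_def PiE_def extensional_def)
    then obtain e where "e \<in> X" and e: "(\<Sum>d\<in>D. \<sigma> d * G e d) = 1"
      using nondegenerate \<sigma> P_def by blast
    let ?\<phi> = "\<lambda>h. \<Sum>d\<in>D. \<sigma> d * G h d"
    have "(\<Sum>h\<in>X. \<chi> \<sigma> h) = (\<Sum>h\<in>X. chi (?\<phi> h + (\<Sum>d\<in>D. \<sigma> d * t d)))"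
      by (simp only: \<chi>_def distrib_left sum.distrib)
    also have "\<dots> = 0"
    proof (rule shifted_character_sum[OF \<open>finite X\<close> \<open>e \<in> X\<close> add_closed neg_closed])
      fix h assume "h \<in> X"
      then have "?\<phi> (h + e) = (\<Sum>d\<in>D. \<sigma> d * G h d + \<sigma> d * G e d)"
        by (intro sum.cong refl) (simp only: additive[OF _ \<open>e \<in> X\<close>] distrib_left)
      then show "?\<phi> (h + e) = ?\<phi> h + 1"
        by (simp only: sum.distrib e)
    qed
    finally show "(\<Sum>h\<in>X. \<chi> \<sigma> h) = 0" .
  qed
  finally show ?thesis
    by simp
qed

subsection \<open>The ring GF(2)[x]/(x^L+1) and the Cyclic hash\<close>

lemma degree_cyc_modulus: "0 < L \<Longrightarrow> degree (monom (1::bit) L + 1) = L"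
  by (simp add: degree_add_eq_left degree_monom_eq)

lemma poly_mod_sum: "(\<Sum>i\<in>A. f i) mod (M :: 'a::field poly) = (\<Sum>i\<in>A. f i mod M)"
  by (induction A rule: infinite_finite_induct) (simp_all add: poly_mod_add_left)

(* Since x^L = 1 in GF(2)[x]/(x^L+1), reduction turns x^a into x^(a mod L). *)
lemma monom_mod_cyc:
  assumes "0 < L"
  shows "monom (c::bit) a mod (monom 1 L + 1) = monom c (a mod L)"
proof -
  define M :: "bit poly" where "M = monom 1 L + 1"
  have deg: "degree M = L"
    unfolding M_def using assms by (rule degree_cyc_modulus)
  have "monom 1 L mod M = (M + 1) mod M"
    by (simp add: M_def add.assoc)
  also have "\<dots> = 1"
    using deg assms by (simp add: poly_mod_add_left mod_poly_less)
  finally have xL: "monom 1 L mod M = 1" .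
  have "monom c a = monom c (a mod L) * monom 1 L ^ (a div L)"
    by (simp add: monom_power mult_monom mod_mult_div_eq add.commute mult.commute)
  then have "monom c a mod M = monom c (a mod L) * ((monom 1 L mod M) ^ (a div L) mod M) mod M"
    by (simp only: power_mod mod_mult_right_eq)
  also have "\<dots> = monom c (a mod L)"
  proof -
    have "degree (monom c (a mod L)) < degree M"
      using deg assms by (meson degree_monom_le le_less_trans mod_less_divisor)
    then show ?thesis
      by (simp add: xL mod_poly_less)
  qed
  finally show ?thesis
    by (simp only: M_def)
qed

lemma cyclic_hash_add: "cyclic_hash L (h + e) s = cyclic_hash L h s + cyclic_hash L e s"
  unfolding cyclic_hash_def cyc_red_def plus_fun_apply distrib_right sum.distrib poly_mod_add_left ..

definition unit_fn :: "'a \<Rightarrow> nat \<Rightarrow> 'a \<Rightarrow> bit poly" where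
  "unit_fn c p = (\<lambda>x. if x = c then monom 1 p else 0)"

lemma coeff_cyclic_hash_unit:
  assumes "0 < L"
  shows "coeff (cyclic_hash L (unit_fn c p) s) j
         = (\<Sum>l<length s. if s ! l = c \<and> (p + (length s - 1 - l)) mod L = j then 1 else 0)"
proof -
  have "unit_fn c p (s ! l) * monom 1 (length s - 1 - l)
        = monom (if s ! l = c then 1 else 0) (p + (length s - 1 - l))" for l
    by (simp add: unit_fn_def mult_monom)
  then have "cyclic_hash L (unit_fn c p) s
        = (\<Sum>l<length s. monom (if s ! l = c then 1 else 0) (p + (length s - 1 - l)) mod (monom 1 L + 1))"
    by (simp only: cyclic_hash_def cyc_red_def poly_mod_sum)
  also have "\<dots> = (\<Sum>l<length s. monom (if s ! l = c then 1 else 0) ((p + (length s - 1 - l)) mod L))"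
    by (simp only: monom_mod_cyc[OF assms])
  finally have hash: "cyclic_hash L (unit_fn c p) s = \<dots>" .
  show ?thesis
    unfolding hash coeff_sum coeff_monom by (intro sum.cong refl) auto
qed

subsection \<open>The family of random functions\<close>

definition hash_family :: "nat \<Rightarrow> ('a \<Rightarrow> bit poly) set" where
  "hash_family L = {h1. \<forall>c. h1 c \<in> cyc_ring L}"

lemma prob_h1_eq:
  fixes E :: "('a::finite \<Rightarrow> bit poly) \<Rightarrow> bool"
  shows "prob_h1 L E
         = real (card {h \<in> hash_family L. E h}) / real (card (hash_family L :: ('a \<Rightarrow> bit poly) set))"
  by (simp only: prob_h1_def hash_family_def mem_Collect_eq)

(* A residue of degree < L is determined by its L coefficients, so there are finitely many. *)
lemma finite_cyc_ring: "finite (cyc_ring L)"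
proof -
  have "cyc_ring L \<subseteq> (\<lambda>f. \<Sum>i<L. monom (f i) i) ` ({..<L} \<rightarrow>\<^sub>E UNIV)"
  proof
    fix p assume "p \<in> cyc_ring L"
    then have deg: "degree p \<le> L - 1" and "{..L - 1} = {..<L}"
      by (auto simp: cyc_ring_def)
    have "p = (\<Sum>i<L. monom (coeff p i) i)"
      using poly_as_sum_of_monoms'[OF deg] \<open>{..L - 1} = {..<L}\<close> by simp
    also have "\<dots> = (\<Sum>i<L. monom (restrict (coeff p) {..<L} i) i)"
      by (intro sum.cong refl) simp
    finally have "p = (\<lambda>f. \<Sum>i<L. monom (f i) i) (restrict (coeff p) {..<L})"
      by (simp only:)
    moreover have "restrict (coeff p) {..<L} \<in> {..<L} \<rightarrow>\<^sub>E UNIV"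
      by simp
    ultimately show "p \<in> (\<lambda>f. \<Sum>i<L. monom (f i) i) ` ({..<L} \<rightarrow>\<^sub>E UNIV)"
      by (rule image_eqI)
  qed
  then show ?thesis
    by (rule finite_subset) (simp add: finite_PiE)
qed

lemma finite_hash_family: "finite (hash_family L :: ('a::finite \<Rightarrow> bit poly) set)"
proof -
  have "hash_family L = (UNIV :: 'a set) \<rightarrow>\<^sub>E cyc_ring L"
    by (simp add: hash_family_def PiE_UNIV_domain Pi_def)
  then show ?thesis
    by (simp add: finite_PiE finite_cyc_ring)
qed

lemma hash_family_add: "h \<in> hash_family L \<Longrightarrow> e \<in> hash_family L \<Longrightarrow> h + e \<in> hash_family L"
  by (auto simp: hash_family_def cyc_ring_def intro: le_less_trans[OF degree_add_le_max])

lemma hash_family_uminus: "e \<in> hash_family L \<Longrightarrow> - e \<in> hash_family L"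
  by (simp add: fun_Compl_def)

lemma zero_in_hash_family: "0 < L \<Longrightarrow> 0 \<in> hash_family L"
  by (simp add: hash_family_def cyc_ring_def)

lemma unit_fn_in_hash_family: "p < L \<Longrightarrow> unit_fn c p \<in> hash_family L"
  by (auto simp: hash_family_def cyc_ring_def unit_fn_def intro: le_less_trans[OF degree_monom_le])

subsection \<open>Deleted and kept bit positions\<close>

definition offset :: "nat \<Rightarrow> int \<Rightarrow> nat \<Rightarrow> nat" where
  "offset L k j = nat ((int j - k) mod int L)"

lemma int_offset: "0 < L \<Longrightarrow> int (offset L k j) = (int j - k) mod int L"
  by (simp add: offset_def)

lemma offset_less: "0 < L \<Longrightarrow> offset L k j < L"
  by (simp add: offset_def nat_less_iff)

lemma offset_inj:
  assumes "j < L" "j' < L" "offset L k j = offset L k j'"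
  shows "j = j'"
proof -
  have "(int j - k) mod int L = (int j' - k) mod int L"
    using assms by (simp add: int_offset[symmetric])
  then have "int j mod int L = int j' mod int L"
    by (metis add.commute diff_add_cancel mod_add_right_eq)
  then show ?thesis
    using assms by simp
qed

lemma offset_cons_position:
  assumes "i < L"
  shows "offset L k (nat ((k + int i) mod int L)) = i"
proof -
  have "int (nat ((k + int i) mod int L)) = (k + int i) mod int L"
    using assms by simp
  then have "(int (nat ((k + int i) mod int L)) - k) mod int L = int i mod int L"
    by (simp add: mod_diff_left_eq)
  then show ?thesis
    using assms by (simp add: offset_def)
qed

lemma mem_cons_positions:
  assumes "j < L" "d \<le> L"
  shows "j \<in> cons_positions L k d \<longleftrightarrow> offset L k j < d"
proof
  assume "j \<in> cons_positions L k d"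
  then obtain i where "i < d" "j = nat ((k + int i) mod int L)"
    by (auto simp: cons_positions_def)
  then show "offset L k j < d"
    using assms by (simp add: offset_cons_position)
next
  assume "offset L k j < d"
  moreover have "j = nat ((k + int (offset L k j)) mod int L)"
    using assms by (simp add: int_offset mod_add_right_eq)
  ultimately show "j \<in> cons_positions L k d"
    by (auto simp: cons_positions_def)
qed

lemma card_cons_positions:
  assumes "d \<le> L"
  shows "card (cons_positions L k d) = d"
proof -
  have "inj_on (\<lambda>i. nat ((k + int i) mod int L)) {0..<d}"
    using assms by (intro inj_on_inverseI[where g = "offset L k"]) (simp add: offset_cons_position)
  then show ?thesis
    by (simp add: cons_positions_def card_image)
qed

definition kept :: "nat \<Rightarrow> int \<Rightarrow> nat \<Rightarrow> nat list" where
  "kept L k d = sorted_list_of_set ({0..<L} - cons_positions L k d)"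

lemma set_kept:
  assumes "d \<le> L"
  shows "set (kept L k d) = {j. j < L \<and> d \<le> offset L k j}"
  using assms by (auto simp: kept_def mem_cons_positions)

lemma length_kept:
  assumes "d \<le> L"
  shows "length (kept L k d) = L - d"
proof -
  have "cons_positions L k d \<subseteq> {0..<L}"
    using assms by (auto simp: cons_positions_def nat_less_iff)
  then show ?thesis
    using assms by (simp add: kept_def card_Diff_subset finite_subset card_cons_positions)
qed

lemma distinct_kept: "distinct (kept L k d)"
  by (simp add: kept_def)

lemma delete_bits_eq_iff:
  assumes "length y = length (kept L k d)"
  shows "delete_bits L (cons_positions L k d) p = y
         \<longleftrightarrow> (\<forall>i < length y. coeff p (kept L k d ! i) = y ! i)"
  using assms by (auto simp: delete_bits_def kept_def[symmetric] list_eq_iff_nth_eq)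

(* Let j be a kept position at distance r = offset j - d \<ge> 0
   past the end of the window, and choose p = (k + E) mod L.  Then the exponent p + (d - l)
   hits j modulo L exactly when r + l = E; no wrap-around can occur since r + l < L. *)
lemma rotation_hits_position:
  assumes "j < L" "E < L" "l \<le> d" "d \<le> offset L k j"
  shows "(nat ((k + int E) mod int L) + (d - l)) mod L = j \<longleftrightarrow> offset L k j - d + l = E"
proof -
  have L: "0 < L"
    using assms by simp
  define r where "r = offset L k j - d + l"
  have r: "r < L"
    using offset_less[OF L, of k j] assms unfolding r_def by linarith
  define q where "q = (int j - k) div int L"
  have int_r: "int r = (int j - k - int L * q) - int d + int l"
    using assms L by (simp add: r_def int_offset q_def minus_div_mult_eq_mod[symmetric] mult.commute)
  define N where "N = (nat ((k + int E) mod int L) + (d - l)) mod L"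
  have "int N = ((k + int E) mod int L + int d - int l) mod int L"
    using assms L by (simp add: N_def zmod_int)
  also have "\<dots> = (k + int E + int d - int l) mod int L"
    by (simp only: add_diff_eq[symmetric] mod_add_left_eq)
  finally have int_N: "int N = (k + int E + int d - int l) mod int L" .
  have "N = j \<longleftrightarrow> int N = int j"
    by (simp only: of_nat_eq_iff)
  also have "\<dots> \<longleftrightarrow> (k + int E + int d - int l) mod int L = int j mod int L"
    using \<open>j < L\<close> by (simp add: int_N)
  also have "\<dots> \<longleftrightarrow> int L dvd (k + int E + int d - int l - int j)"
    by (rule mod_eq_dvd_iff)
  also have "\<dots> \<longleftrightarrow> int L dvd (int E - int r)"
  proof -
    have "int E - int r = (k + int E + int d - int l - int j) + int L * q"
      by (simp add: int_r)
    then show ?thesis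
      by (simp only: dvd_add_left_iff[OF dvd_triv_left])
  qed
  also have "\<dots> \<longleftrightarrow> int E mod int L = int r mod int L"
    by (rule mod_eq_dvd_iff[symmetric])
  also have "\<dots> \<longleftrightarrow> E = r"
    using assms r by simp
  finally show ?thesis
    by (simp add: N_def r_def eq_commute)
qed

definition kept_rank :: "nat \<Rightarrow> int \<Rightarrow> nat \<Rightarrow> nat \<Rightarrow> nat" where
  "kept_rank L k d i = offset L k (kept L k d ! i) - d"

lemma kept_nth:
  assumes "d \<le> L" "i < L - d"
  shows "kept L k d ! i < L" "d \<le> offset L k (kept L k d ! i)"
  using nth_mem[of i "kept L k d"] assms by (simp_all add: length_kept set_kept)

lemma kept_rank_less: "d \<le> L \<Longrightarrow> i < L - d \<Longrightarrow> kept_rank L k d i < L - d"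
  using offset_less[of L k "kept L k d ! i"] kept_nth[of d L i k] by (simp add: kept_rank_def)

lemma inj_kept_rank:
  assumes "d \<le> L"
  shows "inj_on (kept_rank L k d) {..<L - d}"
proof (rule inj_onI)
  fix i i' assume "i \<in> {..<L - d}" "i' \<in> {..<L - d}"
    and eq: "kept_rank L k d i = kept_rank L k d i'"
  then have i: "i < L - d" and i': "i' < L - d"
    by simp_all
  have "offset L k (kept L k d ! i) = offset L k (kept L k d ! i')"
    using eq kept_nth(2)[OF assms i, of k] kept_nth(2)[OF assms i', of k]
    unfolding kept_rank_def by linarith
  then have "kept L k d ! i = kept L k d ! i'"
    by (rule offset_inj[OF kept_nth(1)[OF assms i, of k] kept_nth(1)[OF assms i', of k]])
  then show "i = i'"
    using i i' assms distinct_kept by (simp add: nth_eq_iff_index_eq length_kept)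
qed

subsection \<open>Occurrence polynomials and nondegeneracy\<close>

definition indicator_poly :: "'a list \<Rightarrow> 'a \<Rightarrow> bit poly" where
  "indicator_poly s c = (\<Sum>l<length s. monom (if s ! l = c then 1 else 0) l)"

lemma coeff_indicator_poly:
  "coeff (indicator_poly s c) l = (if l < length s \<and> s ! l = c then 1 else 0)"
  by (simp add: indicator_poly_def coeff_sum coeff_monom sum.If_cases)

lemma degree_indicator_poly: "degree (indicator_poly s c) \<le> length s - 1"
  unfolding indicator_poly_def
  by (rule degree_sum_le) (auto intro: order.trans[OF degree_monom_le])

(* Every position holds some letter, so the occurrence polynomials add up to
   1 + x + ... + x^(n-1). *)
lemma sum_indicator_poly: "(\<Sum>c\<in>UNIV. indicator_poly (s :: 'a::finite list) c) = (\<Sum>l<length s. monom 1 l)"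
proof -
  have "indicator_poly s c = (\<Sum>l\<in>{l\<in>{..<length s}. s ! l = c}. monom 1 l)" for c
    unfolding indicator_poly_def sum.inter_filter[OF finite_lessThan] by (intro sum.cong refl) simp
  then have "(\<Sum>c\<in>UNIV. indicator_poly s c) = (\<Sum>c\<in>UNIV. \<Sum>l\<in>{l\<in>{..<length s}. s ! l = c}. monom 1 l)"
    by simp
  also have "\<dots> = (\<Sum>l<length s. monom 1 l)"
    by (rule sum.group) auto
  finally show ?thesis .
qed

lemma indicator_poly_eqD:
  assumes "length s = length s'" and "\<And>c. indicator_poly s c = indicator_poly s' c"
  shows "s = s'"
proof (rule nth_equalityI)
  fix l assume "l < length s"
  then show "s ! l = s' ! l"
    using arg_cong[OF assms(2)[of "s ! l"], of "\<lambda>p. coeff p l"] assms(1)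
    by (simp add: coeff_indicator_poly split: if_splits)
qed (fact assms(1))

(* If F * [a = c] + G * [a' = c] = 0 for every letter c,
   then summing over c gives (F + G)(1 + x + ... + x^(n-1)) = 0, so F = G; then
   F * ([a = c] + [a' = c]) = 0 for all c, which forces F = 0 because a \<noteq> a'. *)
lemma occurrence_products_vanish:
  fixes a a' :: "'a::finite list" and F G :: "bit poly"
  assumes len: "length a = n" "length a' = n" and "a \<noteq> a'"
    and vanish: "\<And>c. F * indicator_poly a c + G * indicator_poly a' c = 0"
  shows "F = 0 \<and> G = 0"
proof -
  define Q :: "bit poly" where "Q = (\<Sum>l<n. monom 1 l)"
  have "n \<noteq> 0"
    using len \<open>a \<noteq> a'\<close> by auto
  then have "coeff Q 0 = 1"
    by (simp add: Q_def coeff_sum coeff_monom)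
  then have "Q \<noteq> 0"
    by auto
  have "(F + G) * Q = (\<Sum>c\<in>UNIV. F * indicator_poly a c + G * indicator_poly a' c)"
    by (simp add: Q_def sum.distrib sum_distrib_left[symmetric] sum_indicator_poly len distrib_right)
  also have "\<dots> = 0"
    by (simp add: vanish)
  finally have "F = G"
    using \<open>Q \<noteq> 0\<close> by (metis add_left_cancel bitpoly_add_self no_zero_divisors)
  have "F = 0"
  proof (rule ccontr)
    assume "F \<noteq> 0"
    have "indicator_poly a c = indicator_poly a' c" for c
    proof -
      have "F * (indicator_poly a c + indicator_poly a' c) = 0"
        using vanish[of c] \<open>F = G\<close> by (simp add: distrib_left)
      then show ?thesis
        using \<open>F \<noteq> 0\<close> by (metis add_left_cancel bitpoly_add_self mult_eq_0_iff)
    qed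
    then have "a = a'"
      using len by (intro indicator_poly_eqD) simp_all
    with \<open>a \<noteq> a'\<close> show False
      by simp
  qed
  with \<open>F = G\<close> show ?thesis
    by simp
qed

(* Since deg F, deg G < m and deg [s = c] < n, the products have degree < m + n - 1; hence if
   the pair is not (0, 0), some coefficient below m + n - 1 equals 1 for some letter c. *)
lemma nondegenerate_pair:
  fixes a a' :: "'a::finite list" and F G :: "bit poly"
  assumes len: "length a = n" "length a' = n" and "a \<noteq> a'"
    and deg: "degree F < m" "degree G < m" and nonzero: "F \<noteq> 0 \<or> G \<noteq> 0"
  shows "\<exists>c E. E < m + n - 1 \<and> coeff (F * indicator_poly a c + G * indicator_poly a' c) E = 1"
proof (rule ccontr)
  assume "\<not> ?thesis"
  then have small: "coeff (F * indicator_poly a c + G * indicator_poly a' c) E = 0"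
    if "E < m + n - 1" for c E
    using that by auto
  have "n \<noteq> 0"
    using len \<open>a \<noteq> a'\<close> by auto
  have deg_prod: "degree (P * indicator_poly s c) < m + n - 1" if "degree P < m" "length s = n" for P s c
    using degree_mult_le[of P "indicator_poly s c"] degree_indicator_poly[of s c] that \<open>n \<noteq> 0\<close>
    by linarith
  have "F * indicator_poly a c + G * indicator_poly a' c = 0" for c
  proof (rule poly_eqI)
    fix E
    show "coeff (F * indicator_poly a c + G * indicator_poly a' c) E = coeff 0 E"
    proof (cases "E < m + n - 1")
      case True
      then show ?thesis
        using small by simp
    next
      case False
      then have "degree (F * indicator_poly a c) < E" "degree (G * indicator_poly a' c) < E"
        using deg_prod[OF deg(1) len(1)] deg_prod[OF deg(2) len(2)] by (meson leI order.strict_trans2)+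
      then show ?thesis
        by (simp add: coeff_eq_0)
    qed
  qed
  then show False
    using occurrence_products_vanish[OF len \<open>a \<noteq> a'\<close>] nonzero by blast
qed

definition place_poly :: "(nat \<Rightarrow> nat) \<Rightarrow> nat \<Rightarrow> (nat \<Rightarrow> bit) \<Rightarrow> bit poly" where
  "place_poly R m f = (\<Sum>i<m. monom (f i) (R i))"

lemma coeff_place_poly:
  assumes "inj_on R {..<m}" "i < m"
  shows "coeff (place_poly R m f) (R i) = f i"
proof -
  have "coeff (place_poly R m f) (R i) = (\<Sum>i'<m. if i' = i then f i' else 0)"
    unfolding place_poly_def coeff_sum coeff_monom
    by (intro sum.cong refl) (use assms in \<open>auto dest: inj_onD\<close>)
  also have "\<dots> = f i"
    using assms by simp
  finally show ?thesis .
qed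

lemma degree_place_poly:
  assumes "\<And>i. i < m \<Longrightarrow> R i < m" and "0 < m"
  shows "degree (place_poly R m f) < m"
  unfolding place_poly_def using assms
  by (intro degree_sum_less) (auto intro: le_less_trans[OF degree_monom_le])

subsection \<open>The kept bits separate the elementary hash functions\<close>

lemma functional_on_unit_fn:
  fixes s :: "'a list" and js :: "nat list" and f :: "nat \<Rightarrow> bit"
  assumes pos: "\<And>j. j \<in> set js \<Longrightarrow> j < L \<and> length s - 1 \<le> offset L k j" and "E < L"
  defines "R \<equiv> \<lambda>i. offset L k (js ! i) - (length s - 1)"
  shows "(\<Sum>i<length js. f i * coeff (cyclic_hash L (unit_fn c (nat ((k + int E) mod int L))) s) (js ! i))
         = coeff (place_poly R (length js) f * indicator_poly s c) E"
proof -
  let ?p = "nat ((k + int E) mod int L)"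
  have L: "0 < L"
    using \<open>E < L\<close> by simp
  have hit: "(?p + (length s - 1 - l)) mod L = js ! i \<longleftrightarrow> R i + l = E"
    if "i < length js" "l < length s" for i l
    unfolding R_def using that pos[OF nth_mem[OF \<open>i < length js\<close>]] \<open>E < L\<close>
    by (intro rotation_hits_position) auto
  have "(\<Sum>i<length js. f i * coeff (cyclic_hash L (unit_fn c ?p) s) (js ! i))
        = (\<Sum>i<length js. \<Sum>l<length s. if s ! l = c \<and> R i + l = E then f i else 0)"
    unfolding coeff_cyclic_hash_unit[OF L] sum_distrib_left
  proof (intro sum.cong refl)
    fix i l assume "i \<in> {..<length js}" "l \<in> {..<length s}"
    then show "f i * (if s ! l = c \<and> (?p + (length s - 1 - l)) mod L = js ! i then 1 else 0)
               = (if s ! l = c \<and> R i + l = E then f i else 0)"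
      by (simp only: hit lessThan_iff) simp
  qed
  also have "\<dots> = coeff (place_poly R (length js) f * indicator_poly s c) E"
    unfolding place_poly_def indicator_poly_def sum_product mult_monom coeff_sum coeff_monom
    by (intro sum.cong refl) auto
  finally show ?thesis .
qed

(* The 2m observed bits as one function of h1: bit i of the reduced hash of a (for True)
   or of a' (for False). *)
definition kept_bit :: "nat \<Rightarrow> int \<Rightarrow> 'a list \<Rightarrow> 'a list \<Rightarrow> ('a \<Rightarrow> bit poly) \<Rightarrow> bool \<times> nat \<Rightarrow> bit" where
  "kept_bit L k a a' h d =
     coeff (cyclic_hash L h (if fst d then a else a')) (kept L k (length a - 1) ! snd d)"

lemma kept_bit_add: "kept_bit L k a a' (h + e) d = kept_bit L k a a' h d + kept_bit L k a a' e d"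
  by (simp add: kept_bit_def cyclic_hash_add)

lemma kept_bits_on_unit_fn:
  fixes a a' :: "'a list" and \<sigma> :: "bool \<times> nat \<Rightarrow> bit" and k :: int
  assumes len: "length a = n" "length a' = n" and "n \<le> L" and "E < L"
  defines "m \<equiv> L - (n - 1)" and "R \<equiv> kept_rank L k (n - 1)"
  shows "(\<Sum>d \<in> UNIV \<times> {..<m}. \<sigma> d * kept_bit L k a a' (unit_fn c (nat ((k + int E) mod int L))) d)
         = coeff (place_poly R m (\<lambda>i. \<sigma> (True, i)) * indicator_poly a c
                  + place_poly R m (\<lambda>i. \<sigma> (False, i)) * indicator_poly a' c) E"
proof -
  define e where "e = unit_fn c (nat ((k + int E) mod int L))"
  have pos: "\<And>j. j \<in> set (kept L k (n - 1)) \<Longrightarrow> j < L \<and> length s - 1 \<le> offset L k j"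
    if "length s = n" for s :: "'a list"
    using that \<open>n \<le> L\<close> by (simp add: set_kept)
  have R_eq: "(\<lambda>i. offset L k (kept L k (n - 1) ! i) - (length s - 1)) = R"
    if "length s = n" for s :: "'a list"
    using that by (simp add: R_def kept_rank_def[abs_def])
  have len_kept: "length (kept L k (n - 1)) = m"
    using \<open>n \<le> L\<close> by (simp add: length_kept m_def)
  have on_string: "(\<Sum>i<m. f i * coeff (cyclic_hash L e s) (kept L k (n - 1) ! i))
                   = coeff (place_poly R m f * indicator_poly s c) E"
    if "length s = n" for s :: "'a list" and f
    using functional_on_unit_fn[where js = "kept L k (n - 1)" and s = s and f = f and c = c,
        OF pos[OF that] \<open>E < L\<close>]
    by (simp only: R_eq[OF that] len_kept e_def)
  have "(\<Sum>d \<in> UNIV \<times> {..<m}. \<sigma> d * kept_bit L k a a' e d)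
        = (\<Sum>i<m. \<sigma> (True, i) * coeff (cyclic_hash L e a) (kept L k (n - 1) ! i))
          + (\<Sum>i<m. \<sigma> (False, i) * coeff (cyclic_hash L e a') (kept L k (n - 1) ! i))"
    by (simp only: sum.cartesian_product' sum_UNIV_bool kept_bit_def fst_conv snd_conv
        if_True if_False len)
  then show ?thesis
    unfolding e_def[symmetric] on_string[OF len(1)] on_string[OF len(2)] coeff_add .
qed

(* No nonzero linear combination of the kept bits of h(a) and h(a') vanishes on the whole
   family: nondegenerate_pair provides an elementary hash function witnessing this. *)
lemma kept_bits_nondegenerate:
  fixes a a' :: "'a::finite list" and \<sigma> :: "bool \<times> nat \<Rightarrow> bit"
  assumes len: "length a = n" "length a' = n" and "a \<noteq> a'" and "1 \<le> n" "n \<le> L"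
    and nonzero: "\<exists>d \<in> UNIV \<times> {..<L - n + 1}. \<sigma> d \<noteq> 0"
  shows "\<exists>e \<in> hash_family L. (\<Sum>d \<in> UNIV \<times> {..<L - n + 1}. \<sigma> d * kept_bit L k a a' e d) = 1"
proof -
  define m where "m = L - (n - 1)"
  have m: "L - n + 1 = m" "m + n - 1 = L" "0 < m"
    using assms by (simp_all add: m_def)
  define R where "R = kept_rank L k (n - 1)"
  define f g where "f = (\<lambda>i. \<sigma> (True, i))" and "g = (\<lambda>i. \<sigma> (False, i))"
  have inj: "inj_on R {..<m}"
    using inj_kept_rank \<open>n \<le> L\<close> by (simp add: R_def m_def)
  obtain b i where "i < m" "\<sigma> (b, i) \<noteq> 0"
    using nonzero m by auto
  then have "place_poly R m f \<noteq> 0 \<or> place_poly R m g \<noteq> 0"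
    using coeff_place_poly[OF inj \<open>i < m\<close>, of f] coeff_place_poly[OF inj \<open>i < m\<close>, of g]
    by (cases b) (auto simp: f_def g_def)
  moreover have "degree (place_poly R m h) < m" for h
    using kept_rank_less \<open>n \<le> L\<close> \<open>0 < m\<close> by (intro degree_place_poly) (simp_all add: R_def m_def)
  ultimately obtain c E where "E < L"
    and E: "coeff (place_poly R m f * indicator_poly a c + place_poly R m g * indicator_poly a' c) E = 1"
    using nondegenerate_pair[OF len \<open>a \<noteq> a'\<close>] m by metis
  have "unit_fn c (nat ((k + int E) mod int L)) \<in> hash_family L"
    using \<open>E < L\<close> by (simp add: unit_fn_in_hash_family nat_less_iff)
  moreover have "(\<Sum>d \<in> UNIV \<times> {..<m}. \<sigma> d * kept_bit L k a a' (unit_fn c (nat ((k + int E) mod int L))) d) = 1"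
    using E kept_bits_on_unit_fn[OF len \<open>n \<le> L\<close> \<open>E < L\<close>, of \<sigma> k c]
    by (simp only: m_def R_def f_def g_def)
  ultimately show ?thesis
    unfolding m(1) by blast
qed

theorem mainTheorem8:
  fixes L n :: nat and k :: int and a a' :: "'a::finite list" and y y' :: "bit list"
  assumes "1 \<le> n" and "n \<le> L"
    and "length a = n" and "length a' = n" and "a \<noteq> a'"
    and "length y = L - n + 1" and "length y' = L - n + 1"
  shows "prob_h1 L (\<lambda>h1::'a \<Rightarrow> bit poly.
            delete_bits L (cons_positions L k (n - 1)) (cyclic_hash L h1 a) = y \<and>
            delete_bits L (cons_positions L k (n - 1)) (cyclic_hash L h1 a') = y')
         = 1 / 2 ^ (2 * (L - n + 1))"
proof -
  define m where "m = L - n + 1"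
  define D where "D = (UNIV :: bool set) \<times> {..<m}"
  define t where "t d = (if fst d then y else y') ! snd d" for d
  let ?X = "hash_family L :: ('a \<Rightarrow> bit poly) set"
  have "length (kept L k (n - 1)) = m"
    using assms by (simp add: length_kept m_def)
  then have event: "{h \<in> ?X. delete_bits L (cons_positions L k (n - 1)) (cyclic_hash L h a) = y \<and>
                             delete_bits L (cons_positions L k (n - 1)) (cyclic_hash L h a') = y'}
                    = {h \<in> ?X. \<forall>d\<in>D. kept_bit L k a a' h d = t d}"
    using assms by (auto simp: delete_bits_eq_iff D_def t_def kept_bit_def m_def)
  have "real (card {h \<in> ?X. \<forall>d\<in>D. kept_bit L k a a' h d = t d}) * 2 ^ card D = real (card ?X)"
    using kept_bits_nondegenerate[OF assms(3-5,1,2)]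
    by (intro uniform_fibres finite_hash_family hash_family_add hash_family_uminus kept_bit_add)
       (auto simp: D_def m_def)
  moreover have "card D = 2 * m"
    by (simp add: D_def card_cartesian_product)
  moreover have "card ?X > 0"
    using assms zero_in_hash_family[of L] finite_hash_family card_gt_0_iff by fastforce
  ultimately show ?thesis
    unfolding prob_h1_eq event by (simp add: m_def field_simps)
qed

end
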